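(* Every closed semi-smooth subset of $\mathbb{C}$ is a $2$-dimensional topological manifold with boundary.
   Context: Let $B\subset\mathbb{C}$ be closed. For $z\in\partial B$, a vector $\mathbf v\in T_z\mathbb{C}\cong\mathbb{C}$ is normal to $B$ if $\mathbf v\neq 0$ and for every $\theta\in(0,\pi/2)$ there is $\delta>0$ such that the open sector $\{z+te^{i\phi}\mathbf v/|\mathbf v| : \phi\in(-\theta,\theta),\ t\in(0,\delta)\}$ is disjoint from $B$. The closed set $B$ is semi-smooth if (i) for every $z\in\partial B$ the set of vectors normal to $B$ at $z$ is non-empty and convex, and (ii) any non-zero limit of normal vectors is normal: if $z_n\in\partial B$, $\mathbf v_n$ is normal to $B$ at $z_n$, $z_n\to z$ and $\mathbf v_n\to\mathbf v\neq 0$, then $\mathbf v$ is normal to $B$ at $z$. *)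

theory Defs
  imports "HOL-Analysis.Analysis"
begin

definition open_sector :: "complex \<Rightarrow> complex \<Rightarrow> real \<Rightarrow> real \<Rightarrow> complex set" where
  "open_sector z v \<theta> \<delta> =
     {z + complex_of_real t * cis \<phi> * (v / complex_of_real (norm v)) | \<phi> t.
        \<phi> \<in> {-\<theta><..<\<theta>} \<and> t \<in> {0<..<\<delta>}}"

text \<open>v is normal to B at z (z is meant to be a boundary point of B).\<close>
definition normal_vector :: "complex set \<Rightarrow> complex \<Rightarrow> complex \<Rightarrow> bool" where
  "normal_vector B z v \<longleftrightarrow> v \<noteq> 0 \<and>
     (\<forall>\<theta> \<in> {0<..<pi/2}. \<exists>\<delta>>0. open_sector z v \<theta> \<delta> \<inter> B = {})"

definition semi_smooth :: "complex set \<Rightarrow> bool" where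
  "semi_smooth B \<longleftrightarrow> closed B \<and>
     (\<forall>z \<in> frontier B. {v. normal_vector B z v} \<noteq> {} \<and> convex {v. normal_vector B z v}) \<and>
     (\<forall>zs vs z v. (\<forall>n. zs n \<in> frontier B \<and> normal_vector B (zs n) (vs n)) \<and>
        zs \<longlonglongrightarrow> z \<and> vs \<longlonglongrightarrow> v \<and> v \<noteq> 0 \<longrightarrow> normal_vector B z v)"

definition upper_half_plane :: "complex set" where
  "upper_half_plane = {w. Im w \<ge> 0}"

text \<open>A subset of C (with the subspace topology, automatically Hausdorff and second countable)
  is a 2-dimensional topological manifold with boundary if every point has a relatively open
  neighbourhood homeomorphic to a relatively open subset of the closed half-plane.\<close>
definition manifold_with_boundary_2 :: "complex set \<Rightarrow> bool" where
  "manifold_with_boundary_2 M \<longleftrightarrow>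
     (\<forall>x \<in> M. \<exists>U V. x \<in> U \<and> openin (top_of_set M) U \<and>
        openin (top_of_set upper_half_plane) V \<and> U homeomorphic V)"

end

theory Submission
  imports Defs
begin

text \<open>At a boundary point \<open>z\<close> the normal vectors form a closed convex cone without \<open>0\<close>, so
  they all lie in an open cone \<open>\<langle>u, v\<rangle> > c |u|\<close> around a unit vector \<open>v\<close>; by the limit
  condition the normals at nearby boundary points lie in the half as wide cone, hence have positive
  inner product with every direction \<open>d\<close> close to \<open>v\<close>. Such transversality forbids a short ray
  from a point outside \<open>B\<close> in direction \<open>d\<close> to hit \<open>B\<close>: otherwise a point of \<open>B\<close> minimising a
  parabolic function over a cap around the ray is a boundary point whose normal vector, minus the
  gradient, points against \<open>d\<close>. In the coordinates along \<open>v\<close> and \<open>\<i> v\<close> the set \<open>B\<close> is therefore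
  locally the subgraph of a Lipschitz function, and straightening the graph gives a chart onto an
  open subset of the half-plane.\<close>

lemma normal_vector_scaleR:
  assumes "normal_vector B z u" "k > 0"
  shows "normal_vector B z (k *\<^sub>R u)"
proof -
  have "u \<noteq> 0" using assms(1) by (simp add: normal_vector_def)
  then have "k *\<^sub>R u / of_real (norm (k *\<^sub>R u)) = u / of_real (norm u)"
    using assms(2) by (simp add: scaleR_conv_of_real norm_mult)
  then have "open_sector z (k *\<^sub>R u) = open_sector z u"
    by (intro ext) (simp only: open_sector_def)
  then show ?thesis using assms \<open>u \<noteq> 0\<close> by (simp add: normal_vector_def)
qed

lemma normal_vector_not_interior:
  assumes "normal_vector B z u"
  shows "z \<notin> interior B"
proof
  assume "z \<in> interior B"
  then obtain e where "e > 0" "ball z e \<subseteq> B" by (meson mem_interior)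
  have "pi/4 \<in> {0<..<pi/2}" by (simp add: pi_gt_zero)
  then obtain \<delta> where "\<delta> > 0" and free: "open_sector z u (pi/4) \<delta> \<inter> B = {}"
    using assms unfolding normal_vector_def by blast
  define t where "t = min \<delta> e / 2"
  have t: "0 < t" "t < \<delta>" "t < e" using \<open>\<delta> > 0\<close> \<open>e > 0\<close> by (auto simp: t_def)
  have u: "u \<noteq> 0" using assms by (simp add: normal_vector_def)
  have "z + of_real t * cis 0 * (u / of_real (norm u)) \<in> open_sector z u (pi/4) \<delta>"
    unfolding open_sector_def using t by (intro CollectI exI[of _ 0] exI[of _ t]) (simp add: pi_gt_zero)
  moreover have "z + of_real t * cis 0 * (u / of_real (norm u)) \<in> ball z e"
    using t u by (simp add: dist_norm norm_mult norm_divide)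
  ultimately show False using free \<open>ball z e \<subseteq> B\<close> by blast
qed

lemma complex_inner_mult_common_factor: "inner (a * e) (b * e) = (norm e)\<^sup>2 * inner a (b :: complex)"
  by (simp add: inner_complex_def cmod_power2) (simp add: power2_eq_square algebra_simps)

lemma normal_vector_at_local_minimum:
  fixes \<phi> :: "complex \<Rightarrow> real"
  assumes deriv: "(\<phi> has_derivative (\<lambda>h. inner g h)) (at m)" and g: "g \<noteq> 0" and "e > 0"
    and min: "\<And>w. w \<in> B \<Longrightarrow> dist w m < e \<Longrightarrow> \<phi> m \<le> \<phi> w"
  shows "normal_vector B m (- g)"
  unfolding normal_vector_def
proof (intro conjI ballI)
  show "- g \<noteq> 0" using g by simp
  fix \<theta> assume \<theta>: "\<theta> \<in> {0<..<pi/2}"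
  define \<epsilon> where "\<epsilon> = norm g * cos \<theta> / 2"
  have "cos \<theta> > 0" using \<theta> by (auto intro!: cos_gt_zero)
  then have "\<epsilon> > 0" using g by (simp add: \<epsilon>_def)
  then obtain \<delta> where "\<delta> > 0"
    and approx: "\<And>y. norm (y - m) < \<delta> \<Longrightarrow> norm (\<phi> y - \<phi> m - inner g (y - m)) \<le> \<epsilon> * norm (y - m)"
    using deriv unfolding has_derivative_at_alt by blast
  have "open_sector m (- g) \<theta> (min \<delta> e) \<inter> B = {}"
  proof (rule ccontr)
    assume "open_sector m (- g) \<theta> (min \<delta> e) \<inter> B \<noteq> {}"
    then obtain \<psi> t where \<psi>: "\<psi> \<in> {-\<theta><..<\<theta>}" and "t \<in> {0<..<min \<delta> e}"
      and wB: "m + of_real t * cis \<psi> * (- g / of_real (norm (- g))) \<in> B" (is "?w \<in> B")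
      unfolding open_sector_def by blast
    then have t: "0 < t" "t < \<delta>" "t < e" by auto
    have dist: "norm (?w - m) = t"
      using g t by (simp add: norm_mult norm_divide)
    have "inner g (cis \<psi> * g) = (norm g)\<^sup>2 * cos \<psi>"
      using complex_inner_mult_common_factor[of 1 g "cis \<psi>"] by simp
    moreover have "?w - m = - ((t / norm g) *\<^sub>R (cis \<psi> * g))"
      by (simp add: scaleR_conv_of_real)
    ultimately have "inner g (?w - m) = - t * norm g * cos \<psi>"
      using g by (simp add: power2_eq_square)
    moreover have "cos \<theta> \<le> cos \<bar>\<psi>\<bar>"
      using \<psi> \<theta> by (intro cos_monotone_0_pi_le) auto
    then have "t * norm g * cos \<theta> \<le> t * norm g * cos \<psi>"
      using t by (intro mult_left_mono) auto
    moreover have "\<phi> ?w - \<phi> m - inner g (?w - m) \<le> \<epsilon> * t"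
      using approx[of ?w] dist t by (simp add: abs_le_iff)
    moreover have "\<epsilon> * t = t * norm g * cos \<theta> / 2" by (simp add: \<epsilon>_def)
    moreover have "t * norm g * cos \<theta> > 0" using \<open>cos \<theta> > 0\<close> g t by simp
    ultimately have "\<phi> ?w < \<phi> m" by linarith
    with min[OF wB] dist t show False by (simp add: dist_norm)
  qed
  then show "\<exists>\<delta>>0. open_sector m (- g) \<theta> \<delta> \<inter> B = {}"
    using \<open>\<delta> > 0\<close> \<open>e > 0\<close> by (intro exI[of _ "min \<delta> e"]) auto
qed

definition parabola :: "complex \<Rightarrow> complex \<Rightarrow> real \<Rightarrow> complex \<Rightarrow> real" where
  "parabola q e K w = Re ((w - q) / e) + K * (Im ((w - q) / e))\<^sup>2"

lemma has_derivative_parabola: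
  assumes "norm e = 1"
  shows "(parabola q e K has_derivative inner (Complex 1 (2 * K * Im ((m - q) / e)) * e)) (at m)"
proof -
  have "e \<noteq> 0" using assms by auto
  have "(parabola q e K has_derivative (\<lambda>h. Re (h / e) + K * (2 * Im ((m - q) / e) * Im (h / e)))) (at m)"
    unfolding parabola_def using \<open>e \<noteq> 0\<close> by (auto intro!: derivative_eq_intros)
  moreover have "inner (Complex 1 (2 * K * Im ((m - q) / e)) * e) h
      = Re (h / e) + K * (2 * Im ((m - q) / e) * Im (h / e))" for h
  proof -
    have "inner (Complex 1 (2 * K * Im ((m - q) / e)) * e) h
        = inner (Complex 1 (2 * K * Im ((m - q) / e)) * e) (h / e * e)"
      using \<open>e \<noteq> 0\<close> by simp
    also have "\<dots> = inner (Complex 1 (2 * K * Im ((m - q) / e))) (h / e)"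
      unfolding complex_inner_mult_common_factor assms by simp
    finally show ?thesis by (simp add: inner_complex_def)
  qed
  ultimately show ?thesis by presburger
qed

lemma parabola_cap_bounds:
  assumes e: "norm e = 1" and "\<rho> > 0" "\<sigma> > 0"
    and cap: "parabola q e (\<sigma> / \<rho>\<^sup>2) w \<le> \<sigma>" "0 \<le> Re ((w - q) / e)"
  shows "Re ((w - q) / e) \<le> \<sigma>" "dist w q \<le> Re ((w - q) / e) + \<rho>"
proof -
  define y where "y = (w - q) / e"
  have "0 \<le> \<sigma> / \<rho>\<^sup>2 * (Im y)\<^sup>2" using \<open>\<sigma> > 0\<close> by simp
  then show "Re y \<le> \<sigma>" using cap by (simp add: parabola_def y_def)
  have "\<sigma> / \<rho>\<^sup>2 * (Im y)\<^sup>2 \<le> \<sigma>" using cap by (simp add: parabola_def y_def)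
  then have "(Im y)\<^sup>2 \<le> \<rho>\<^sup>2" using \<open>\<rho> > 0\<close> \<open>\<sigma> > 0\<close> by (simp add: field_simps)
  then have "\<bar>Im y\<bar> \<le> \<rho>" using \<open>\<rho> > 0\<close> abs_le_square_iff[of "Im y" \<rho>] by simp
  moreover have "dist w q = norm y" using e by (simp add: y_def dist_norm norm_divide)
  ultimately show "dist w q \<le> Re y + \<rho>" using cmod_le[of y] cap(2) by (simp add: y_def)
qed

text \<open>With \<open>K = \<sigma> / \<rho>\<^sup>2\<close> the cap \<open>parabola q e K w \<le> \<sigma>\<close>, \<open>Re ((w - q) / e) \<ge> 0\<close> has its vertex at
  \<open>q + \<sigma> e\<close> and its base, the segment of half-width \<open>\<rho>\<close> through \<open>q\<close> orthogonal to \<open>e\<close>, inside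
  the free ball; so a minimiser over the cap cannot lie on the base and is a local minimiser over
  \<open>B\<close>.\<close>

lemma parabola_cap_minimiser:
  assumes cl: "closed B" and e: "norm e = 1" and "\<rho> > 0" "\<sigma> > 0"
    and free: "cball q \<rho> \<inter> B = {}" and "q + of_real \<sigma> * e \<in> B"
  obtains m \<epsilon> where "m \<in> B" "dist m q \<le> \<rho> + \<sigma>" "\<epsilon> > 0"
    "\<And>w. w \<in> B \<Longrightarrow> dist w m < \<epsilon> \<Longrightarrow> parabola q e (\<sigma> / \<rho>\<^sup>2) m \<le> parabola q e (\<sigma> / \<rho>\<^sup>2) w"
proof -
  define \<phi> where "\<phi> = parabola q e (\<sigma> / \<rho>\<^sup>2)"
  define \<tau> where "\<tau> w = Re ((w - q) / e)" for w
  define S where "S = {w. \<phi> w \<le> \<sigma> \<and> 0 \<le> \<tau> w}"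
  have "e \<noteq> 0" using e by auto
  have bounds: "\<tau> w \<le> \<sigma>" "dist w q \<le> \<tau> w + \<rho>" if "w \<in> S" for w
    using parabola_cap_bounds[OF e \<open>\<rho> > 0\<close> \<open>\<sigma> > 0\<close>] that by (simp_all add: S_def \<phi>_def \<tau>_def)
  have S_cball: "S \<subseteq> cball q (\<rho> + \<sigma>)"
    using bounds by (fastforce simp: dist_commute)
  have cont_\<tau>: "continuous_on UNIV \<tau>"
    unfolding \<tau>_def by (intro continuous_intros) (use \<open>e \<noteq> 0\<close> in auto)
  have cont_\<phi>: "continuous_on UNIV \<phi>"
    unfolding \<phi>_def parabola_def by (intro continuous_intros) (use \<open>e \<noteq> 0\<close> in auto)
  have "closed S"
    unfolding S_def by (intro closed_Collect_conj closed_Collect_le continuous_intros cont_\<phi> cont_\<tau>)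
  then have "compact (S \<inter> B)"
    using cl S_cball bounded_subset[OF bounded_cball, of "S \<inter> B" q "\<rho> + \<sigma>"]
    by (simp add: compact_eq_bounded_closed closed_Int le_infI1)
  moreover have "q + of_real \<sigma> * e \<in> S \<inter> B"
    using \<open>q + of_real \<sigma> * e \<in> B\<close> \<open>\<sigma> > 0\<close> \<open>e \<noteq> 0\<close> by (simp add: S_def \<phi>_def \<tau>_def parabola_def)
  ultimately obtain m where m: "m \<in> S \<inter> B" and minimal: "\<And>w. w \<in> S \<inter> B \<Longrightarrow> \<phi> m \<le> \<phi> w"
    using continuous_attains_inf[OF _ _ continuous_on_subset[OF cont_\<phi> subset_UNIV]] by (metis empty_iff)
  have "\<tau> m > 0"
  proof (rule ccontr)
    assume "\<not> \<tau> m > 0"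
    then have "m \<in> cball q \<rho>" using bounds(2)[of m] m by (simp add: S_def dist_commute)
    then show False using free m by blast
  qed
  show ?thesis
  proof (rule that)
    show "m \<in> B" "\<tau> m > 0" using m \<open>\<tau> m > 0\<close> by auto
    show "dist m q \<le> \<rho> + \<sigma>" using m S_cball by (auto simp: dist_commute)
    fix w assume "w \<in> B" "dist w m < \<tau> m"
    show "parabola q e (\<sigma> / \<rho>\<^sup>2) m \<le> parabola q e (\<sigma> / \<rho>\<^sup>2) w"
    proof (rule ccontr)
      assume "\<not> ?thesis"
      then have "\<phi> w < \<phi> m" by (simp add: \<phi>_def)
      moreover have "\<tau> m - \<tau> w \<le> dist w m"
      proof -
        have "(m - q) / e - (w - q) / e = (m - w) / e" by (simp add: diff_divide_distrib)
        then have "norm ((m - q) / e - (w - q) / e) = dist w m"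
          using e by (simp add: norm_divide dist_norm norm_minus_commute)
        then show ?thesis using abs_Re_le_cmod[of "(m - q) / e - (w - q) / e"] by (simp add: \<tau>_def)
      qed
      ultimately have "w \<in> S \<inter> B" using \<open>w \<in> B\<close> \<open>dist w m < \<tau> m\<close> m by (auto simp: S_def)
      then show False using minimal \<open>\<phi> w < \<phi> m\<close> by fastforce
    qed
  qed
qed

lemma ray_outside_closed_set:
  fixes B :: "complex set"
  assumes cl: "closed B" and q: "q \<notin> B" and "s \<ge> 0" and "s * norm d < R"
    and transversal: "\<And>w u. w \<in> frontier B \<Longrightarrow> dist w q < R \<Longrightarrow> normal_vector B w u \<Longrightarrow> inner u d > 0"
  shows "q + of_real s * d \<notin> B"
proof
  assume "q + of_real s * d \<in> B"
  then have "d \<noteq> 0" "s \<noteq> 0" using q by auto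
  define e where "e = d / of_real (norm d)"
  define \<sigma> where "\<sigma> = s * norm d"
  have e: "norm e = 1" using \<open>d \<noteq> 0\<close> by (simp add: e_def norm_divide)
  have "\<sigma> > 0" using \<open>s \<ge> 0\<close> \<open>s \<noteq> 0\<close> \<open>d \<noteq> 0\<close> by (simp add: \<sigma>_def)
  have "q + of_real \<sigma> * e \<in> B" using \<open>q + of_real s * d \<in> B\<close> \<open>d \<noteq> 0\<close> by (simp add: e_def \<sigma>_def)
  obtain \<rho>0 where "\<rho>0 > 0" "ball q \<rho>0 \<subseteq> - B"
    using cl q by (meson ComplI open_Compl open_contains_ball)
  define \<rho> where "\<rho> = min (\<rho>0 / 2) ((R - \<sigma>) / 2)"
  have "\<rho> > 0" using \<open>\<rho>0 > 0\<close> \<open>s * norm d < R\<close> by (simp add: \<rho>_def \<sigma>_def)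
  have "\<rho> \<le> (R - \<sigma>) / 2" unfolding \<rho>_def by (rule min.cobounded2)
  then have "\<rho> + \<sigma> < R" using \<open>s * norm d < R\<close> by (simp add: \<sigma>_def)
  have "cball q \<rho> \<subseteq> ball q \<rho>0" using \<open>\<rho>0 > 0\<close> by (auto simp: \<rho>_def subset_eq)
  then have "cball q \<rho> \<inter> B = {}" using \<open>ball q \<rho>0 \<subseteq> - B\<close> by blast
  then obtain m \<epsilon> where "m \<in> B" "dist m q \<le> \<rho> + \<sigma>" "\<epsilon> > 0"
    and local_min: "\<And>w. w \<in> B \<Longrightarrow> dist w m < \<epsilon> \<Longrightarrow> parabola q e (\<sigma> / \<rho>\<^sup>2) m \<le> parabola q e (\<sigma> / \<rho>\<^sup>2) w"
    using parabola_cap_minimiser[OF cl e \<open>\<rho> > 0\<close> \<open>\<sigma> > 0\<close> _ \<open>q + of_real \<sigma> * e \<in> B\<close>] by blast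
  define g where "g = Complex 1 (2 * (\<sigma> / \<rho>\<^sup>2) * Im ((m - q) / e)) * e"
  have "g \<noteq> 0" unfolding g_def using e by (metis Complex_eq_0 mult_eq_0_iff norm_zero one_neq_zero)
  then have normal: "normal_vector B m (- g)"
    using normal_vector_at_local_minimum[OF has_derivative_parabola[OF e] _ \<open>\<epsilon> > 0\<close> local_min]
    by (simp add: g_def)
  then have "m \<in> frontier B"
    using \<open>m \<in> B\<close> cl normal_vector_not_interior by (auto simp: frontier_def closure_closed)
  then have "inner (- g) d > 0"
    using transversal normal \<open>dist m q \<le> \<rho> + \<sigma>\<close> \<open>\<rho> + \<sigma> < R\<close> by fastforce
  moreover have "inner g d = norm d"
  proof -
    have "inner g e = 1"
      using complex_inner_mult_common_factor[of "Complex 1 (2 * (\<sigma> / \<rho>\<^sup>2) * Im ((m - q) / e))" e 1] e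
      by (simp add: g_def inner_complex_def)
    moreover have "d = norm d *\<^sub>R e" using \<open>d \<noteq> 0\<close> by (simp add: e_def scaleR_conv_of_real)
    ultimately show ?thesis by (metis inner_scaleR_right mult.right_neutral)
  qed
  ultimately show False by simp
qed

lemma semi_smooth_normal_limit:
  assumes "semi_smooth B" "\<And>n. zs n \<in> frontier B" "\<And>n. normal_vector B (zs n) (vs n)"
    and "zs \<longlonglongrightarrow> z" "vs \<longlonglongrightarrow> v" "v \<noteq> 0"
  shows "normal_vector B z v"
  using assms unfolding semi_smooth_def by blast

lemma normal_cone_separated:
  assumes ss: "semi_smooth B" and z: "z \<in> frontier B"
  obtains v c where "norm v = 1" "c > 0" "\<And>u. normal_vector B z u \<Longrightarrow> c * norm u < inner u v"
proof -
  define N where "N = {u. normal_vector B z u}"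
  define K where "K = N \<inter> sphere 0 1"
  have "closed K" unfolding closed_sequential_limits
  proof (intro allI impI)
    fix x l assume x: "(\<forall>n. x n \<in> K) \<and> x \<longlonglongrightarrow> l"
    have "(\<lambda>n. norm (x n)) \<longlonglongrightarrow> norm l" using x by (intro tendsto_norm) simp
    moreover have "(\<lambda>n. norm (x n)) = (\<lambda>n. 1)" using x by (simp add: K_def)
    ultimately have "norm l = 1" by (simp add: LIMSEQ_const_iff)
    moreover have "\<And>n. normal_vector B z (x n)" using x by (simp add: K_def N_def)
    ultimately have "normal_vector B z l"
      using semi_smooth_normal_limit[OF ss _ _ tendsto_const] z x by force
    then show "l \<in> K" using \<open>norm l = 1\<close> by (simp add: K_def N_def)
  qed
  then have "compact (convex hull K)"
    by (intro compact_convex_hull) (auto simp: compact_eq_bounded_closed K_def intro: bounded_subset)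
  moreover have "convex hull K \<subseteq> N"
    using ss z by (intro hull_minimal) (auto simp: semi_smooth_def K_def N_def)
  then have "0 \<notin> convex hull K" by (auto simp: N_def normal_vector_def)
  ultimately obtain a b where "a \<noteq> 0" "b > 0" and sep: "\<And>x. x \<in> convex hull K \<Longrightarrow> b < inner a x"
    using separating_hyperplane_closed_0[OF convex_convex_hull compact_imp_closed] by blast
  show ?thesis
  proof
    show "norm (a /\<^sub>R norm a) = 1" "b / norm a > 0" using \<open>a \<noteq> 0\<close> \<open>b > 0\<close> by auto
    fix u assume u: "normal_vector B z u"
    then have "u \<noteq> 0" by (simp add: normal_vector_def)
    then have "(1 / norm u) *\<^sub>R u \<in> K"
      using normal_vector_scaleR[OF u] by (simp add: K_def N_def)
    then have "b < inner a ((1 / norm u) *\<^sub>R u)" using sep[OF hull_inc] by blast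
    then show "b / norm a * norm u < inner u (a /\<^sub>R norm a)"
      using \<open>u \<noteq> 0\<close> \<open>a \<noteq> 0\<close> by (simp add: field_simps inner_commute)
  qed
qed

lemma normals_near_in_open_cone:
  assumes ss: "semi_smooth B" and z: "z \<in> frontier B" and "c > 0"
    and cone: "\<And>u. normal_vector B z u \<Longrightarrow> c * norm u < inner u v"
  obtains r where "r > 0"
    "\<And>w u. w \<in> frontier B \<Longrightarrow> dist w z < r \<Longrightarrow> normal_vector B w u \<Longrightarrow> c / 2 * norm u < inner u v"
proof (rule ccontr)
  assume "\<not> thesis"
  then have "\<forall>n. \<exists>w u. w \<in> frontier B \<and> dist w z < inverse (Suc n) \<and> normal_vector B w u
      \<and> inner u v \<le> c / 2 * norm u"
    using that by (meson inverse_Suc not_le)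
  then obtain W U where W: "\<And>n. W n \<in> frontier B" "\<And>n. dist (W n) z < inverse (Suc n)"
    and U: "\<And>n. normal_vector B (W n) (U n)" "\<And>n. inner (U n) v \<le> c / 2 * norm (U n)"
    by metis
  define E where "E n = (1 / norm (U n)) *\<^sub>R U n" for n
  have "U n \<noteq> 0" for n using U(1) by (simp add: normal_vector_def)
  then have E: "E n \<in> sphere 0 1" "normal_vector B (W n) (E n)" "inner (E n) v \<le> c / 2" for n
    using normal_vector_scaleR[OF U(1)] U(2)[of n] by (auto simp: E_def divide_le_eq)
  obtain l r where "l \<in> sphere 0 1" "strict_mono r" and lim: "(E \<circ> r) \<longlonglongrightarrow> l"
    using compact_imp_seq_compact[OF compact_sphere] E(1) unfolding seq_compact_def by metis
  have "(\<lambda>n. W n - z) \<longlonglongrightarrow> 0"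
    by (rule Lim_null_comparison[OF _ LIMSEQ_inverse_real_of_nat])
       (use W(2) in \<open>auto simp: dist_norm intro!: always_eventually less_imp_le\<close>)
  then have "(W \<circ> r) \<longlonglongrightarrow> z"
    using LIMSEQ_subseq_LIMSEQ \<open>strict_mono r\<close> by (simp add: Lim_null[symmetric])
  moreover have "l \<noteq> 0" using \<open>l \<in> sphere 0 1\<close> by auto
  ultimately have "normal_vector B z l"
    using semi_smooth_normal_limit[OF ss _ _ _ lim, of "W \<circ> r"] W(1) E(2) by simp
  then have "c < inner l v" using cone \<open>l \<in> sphere 0 1\<close> by fastforce
  moreover have "inner l v \<le> c / 2"
  proof (rule LIMSEQ_le_const2)
    show "(\<lambda>n. inner ((E \<circ> r) n) v) \<longlonglongrightarrow> inner l v" by (intro tendsto_intros lim)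
  qed (use E(3) in auto)
  ultimately show False using \<open>c > 0\<close> by simp
qed

lemma semi_smooth_locally_transversal:
  assumes "semi_smooth B" "z \<in> frontier B"
  obtains v c r where "norm v = 1" "0 < c" "c \<le> 1" "0 < r"
    "\<And>w u d. w \<in> frontier B \<Longrightarrow> dist w z < r \<Longrightarrow> normal_vector B w u \<Longrightarrow> norm (d - v) \<le> c
      \<Longrightarrow> 0 < inner u d"
proof -
  obtain v c where v: "norm v = 1" and "c > 0"
    and "\<And>u. normal_vector B z u \<Longrightarrow> c * norm u < inner u v"
    using normal_cone_separated[OF assms] by blast
  then obtain r where "r > 0" and near: "\<And>w u. w \<in> frontier B \<Longrightarrow> dist w z < r
      \<Longrightarrow> normal_vector B w u \<Longrightarrow> c / 2 * norm u < inner u v"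
    using normals_near_in_open_cone[OF assms] by blast
  show ?thesis
  proof (rule that[of v "min (c / 2) 1" r])
    fix w u d assume w: "w \<in> frontier B" "dist w z < r" "normal_vector B w u"
      and d: "norm (d - v) \<le> min (c / 2) 1"
    have "\<bar>inner u (d - v)\<bar> \<le> norm u * norm (d - v)" by (rule Cauchy_Schwarz_ineq2)
    also have "\<dots> \<le> norm u * (c / 2)" using d by (intro mult_left_mono) auto
    finally have "- (c / 2 * norm u) \<le> inner u (d - v)" by (metis abs_le_D2 minus_le_iff mult.commute)
    then show "0 < inner u d" using near[OF w] by (simp add: inner_diff_right)
  qed (use v \<open>c > 0\<close> \<open>r > 0\<close> in auto)
qed

definition frame_point :: "complex \<Rightarrow> complex \<Rightarrow> real \<Rightarrow> real \<Rightarrow> complex" where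
  "frame_point z v h t = z + (of_real t + \<i> * of_real h) * v"

lemma frame_point_coordinates:
  assumes "v \<noteq> 0"
  shows "frame_point z v (Im ((w - z) / v)) (Re ((w - z) / v)) = w"
  using assms complex_eq[of "(w - z) / v"] by (simp add: frame_point_def)

lemma dist_frame_point_le:
  assumes "norm v = 1"
  shows "dist (frame_point z v h t) z \<le> \<bar>t\<bar> + \<bar>h\<bar>"
  using assms norm_triangle_ineq[of "of_real t" "\<i> * of_real h"]
  by (simp add: frame_point_def dist_norm norm_mult)

lemma frame_point_shift:
  assumes "s \<noteq> 0"
  shows "frame_point z v h t = frame_point z v h' (t - s) + of_real s * (v + of_real ((h - h') / s) * (\<i> * v))"
proof -
  have "of_real s * (v + of_real ((h - h') / s) * (\<i> * v))
      = of_real s * v + (of_real s * of_real ((h - h') / s)) * (\<i> * v)"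
    by (simp only: distrib_left mult.assoc)
  also have "of_real s * of_real ((h - h') / s) = (of_real (h - h') :: complex)"
    using assms by (simp flip: of_real_mult)
  finally show ?thesis by (simp add: frame_point_def algebra_simps)
qed

lemma transversal_cone_stable:
  assumes cl: "closed B" and v: "norm v = 1" and "0 < c" "c \<le> 1" and "a + 5 * b < r"
    and transversal: "\<And>w u d. w \<in> frontier B \<Longrightarrow> dist w z < r \<Longrightarrow> normal_vector B w u
      \<Longrightarrow> norm (d - v) \<le> c \<Longrightarrow> 0 < inner u d"
    and box: "\<bar>h\<bar> \<le> a" "\<bar>h'\<bar> \<le> a" "\<bar>t\<bar> \<le> b" "\<bar>t'\<bar> \<le> b"
    and below: "t' + \<bar>h - h'\<bar> / c \<le> t" and "frame_point z v h t \<in> B"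
  shows "frame_point z v h' t' \<in> B"
proof (rule ccontr)
  assume out: "frame_point z v h' t' \<notin> B"
  define s where "s = t - t'"
  define d where "d = v + of_real ((h - h') / s) * (\<i> * v)"
  have "0 \<le> \<bar>h - h'\<bar> / c" using \<open>0 < c\<close> by simp
  then have "t' \<le> t" using below by linarith
  moreover have "t' \<noteq> t"
  proof
    assume "t' = t"
    then have "h = h'" using below \<open>0 < c\<close> by (simp add: divide_le_0_iff)
    with \<open>t' = t\<close> out \<open>frame_point z v h t \<in> B\<close> show False by simp
  qed
  ultimately have "s > 0" by (simp add: s_def)
  have "norm (d - v) \<le> c"
  proof -
    have "norm (d - v) = \<bar>h - h'\<bar> / s"
      using v \<open>s > 0\<close> by (simp add: d_def norm_mult del: of_real_divide of_real_diff)
    also have "\<dots> \<le> c" using below \<open>s > 0\<close> \<open>c > 0\<close> by (simp add: s_def field_simps)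
    finally show ?thesis .
  qed
  have "s * norm d < r - dist (frame_point z v h' t') z"
  proof -
    have "norm d \<le> 2"
      using norm_triangle_sub[of d v] \<open>norm (d - v) \<le> c\<close> v \<open>c \<le> 1\<close> by simp
    then have "s * norm d \<le> 2 * b * 2"
      using box \<open>s > 0\<close> by (intro mult_mono) (auto simp: s_def)
    then show ?thesis using dist_frame_point_le[OF v, of z h' t'] box \<open>a + 5 * b < r\<close> by linarith
  qed
  moreover have "0 < inner u d"
    if "w \<in> frontier B" "dist w (frame_point z v h' t') < r - dist (frame_point z v h' t') z"
      and "normal_vector B w u" for w u
  proof (rule transversal[OF that(1) _ that(3) \<open>norm (d - v) \<le> c\<close>])
    show "dist w z < r" using that(2) dist_triangle[of w z "frame_point z v h' t'"] by linarith
  qed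
  ultimately have "frame_point z v h' t' + of_real s * d \<notin> B"
    using ray_outside_closed_set[OF cl out] \<open>s > 0\<close> by simp
  then show False
    using frame_point_shift[of s z v h t h'] \<open>s > 0\<close> \<open>frame_point z v h t \<in> B\<close> by (simp add: s_def d_def)
qed

lemma closed_downset_threshold:
  fixes Q :: "real \<Rightarrow> bool" and b :: real
  defines "f \<equiv> Sup {t. \<bar>t\<bar> \<le> b \<and> Q t}"
  assumes "0 \<le> b" and closed: "closed {t. Q t}" and "Q (- b)" "\<not> Q b"
    and down: "\<And>t t'. \<bar>t\<bar> \<le> b \<Longrightarrow> \<bar>t'\<bar> \<le> b \<Longrightarrow> t' \<le> t \<Longrightarrow> Q t \<Longrightarrow> Q t'"
  shows "- b \<le> f" "f < b" "\<And>t. \<bar>t\<bar> \<le> b \<Longrightarrow> Q t \<longleftrightarrow> t \<le> f"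
proof -
  define S where "S = {t. \<bar>t\<bar> \<le> b \<and> Q t}"
  have "- b \<in> S" using \<open>Q (- b)\<close> \<open>0 \<le> b\<close> by (simp add: S_def)
  have "bdd_above S" unfolding S_def bdd_above_def by (auto intro: exI[of _ b])
  have "S = {-b..b} \<inter> {t. Q t}" by (auto simp: S_def)
  then have "closed S" using closed by (simp add: closed_Int)
  then have "f \<in> S"
    using closed_contains_Sup[OF _ \<open>bdd_above S\<close>] \<open>- b \<in> S\<close> by (auto simp: f_def S_def[symmetric])
  have upper: "t \<le> f" if "t \<in> S" for t
    using cSup_upper[OF that \<open>bdd_above S\<close>] by (simp add: f_def S_def)
  show "- b \<le> f" using upper[OF \<open>- b \<in> S\<close>] .
  have "f \<noteq> b" using \<open>f \<in> S\<close> \<open>\<not> Q b\<close> by (auto simp: S_def)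
  then show "f < b" using \<open>f \<in> S\<close> by (auto simp: S_def abs_le_iff)
  show "Q t \<longleftrightarrow> t \<le> f" if "\<bar>t\<bar> \<le> b" for t
  proof
    show "Q t \<Longrightarrow> t \<le> f" using upper that by (simp add: S_def)
    show "t \<le> f \<Longrightarrow> Q t" using down[of f t] \<open>f \<in> S\<close> that by (simp add: S_def)
  qed
qed

lemma lipschitz_subgraph_of_cone_stable:
  fixes Q :: "real \<Rightarrow> real \<Rightarrow> bool"
  assumes "0 \<le> a" "0 \<le> b" "0 \<le> L"
    and closed: "\<And>h. closed {t. Q h t}"
    and bottom: "\<And>h. \<bar>h\<bar> \<le> a \<Longrightarrow> Q h (- b)"
    and top: "\<And>h. \<bar>h\<bar> \<le> a \<Longrightarrow> \<not> Q h b"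
    and cone: "\<And>h h' t t'. \<bar>h\<bar> \<le> a \<Longrightarrow> \<bar>h'\<bar> \<le> a \<Longrightarrow> \<bar>t\<bar> \<le> b \<Longrightarrow> \<bar>t'\<bar> \<le> b
      \<Longrightarrow> t' + L * \<bar>h - h'\<bar> \<le> t \<Longrightarrow> Q h t \<Longrightarrow> Q h' t'"
  obtains F where "L-lipschitz_on UNIV F" "\<And>h. \<bar>h\<bar> \<le> a \<Longrightarrow> F h < b"
    "\<And>h t. \<bar>h\<bar> \<le> a \<Longrightarrow> \<bar>t\<bar> \<le> b \<Longrightarrow> Q h t \<longleftrightarrow> t \<le> F h"
proof -
  define f where "f h = Sup {t. \<bar>t\<bar> \<le> b \<and> Q h t}" for h
  have column: "- b \<le> f h \<and> f h < b \<and> (\<forall>t. \<bar>t\<bar> \<le> b \<longrightarrow> Q h t \<longleftrightarrow> t \<le> f h)" if "\<bar>h\<bar> \<le> a" for h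
  proof -
    have down: "Q h t'" if "\<bar>t\<bar> \<le> b" "\<bar>t'\<bar> \<le> b" "t' \<le> t" "Q h t" for t t'
      using cone[of h h t t'] \<open>\<bar>h\<bar> \<le> a\<close> that by simp
    note threshold = closed_downset_threshold[where Q = "Q h", OF \<open>0 \<le> b\<close> closed bottom[OF that] top[OF that]]
    have "- b \<le> f h" "f h < b" "\<And>t. \<bar>t\<bar> \<le> b \<Longrightarrow> Q h t \<longleftrightarrow> t \<le> f h"
      unfolding f_def by (rule threshold, rule down, assumption+)+
    then show ?thesis by blast
  qed
  have slope: "f h - L * \<bar>h - h'\<bar> \<le> f h'" if "\<bar>h\<bar> \<le> a" "\<bar>h'\<bar> \<le> a" for h h'
  proof (cases "f h - L * \<bar>h - h'\<bar> < - b")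
    case True then show ?thesis using column[OF that(2)] by linarith
  next
    case False
    have "L * \<bar>h - h'\<bar> \<ge> 0" using \<open>0 \<le> L\<close> by simp
    then have "Q h' (f h - L * \<bar>h - h'\<bar>)"
      using False column[OF that(1)] by (intro cone[OF that, of "f h"]) auto
    then show ?thesis using False column[OF that(2)] column[OF that(1)] \<open>L * \<bar>h - h'\<bar> \<ge> 0\<close> by auto
  qed
  define clamp where "clamp h = max (- a) (min a h)" for h
  have clamp: "\<bar>clamp h\<bar> \<le> a" "\<bar>h\<bar> \<le> a \<Longrightarrow> clamp h = h" "\<bar>clamp x - clamp y\<bar> \<le> \<bar>x - y\<bar>" for h x y
    using \<open>0 \<le> a\<close> by (auto simp: clamp_def)
  show ?thesis
  proof (rule that[of "f \<circ> clamp"])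
    show "L-lipschitz_on UNIV (f \<circ> clamp)"
    proof (rule lipschitz_onI)
      fix x y :: real
      have "\<bar>f (clamp x) - f (clamp y)\<bar> \<le> L * \<bar>clamp x - clamp y\<bar>"
        using slope[OF clamp(1) clamp(1), of x y] slope[OF clamp(1) clamp(1), of y x]
        by (simp add: abs_minus_commute)
      also have "\<dots> \<le> L * \<bar>x - y\<bar>" using clamp(3) \<open>0 \<le> L\<close> by (intro mult_left_mono)
      finally show "dist ((f \<circ> clamp) x) ((f \<circ> clamp) y) \<le> L * dist x y" by (simp add: dist_real_def)
    qed fact
  qed (use column clamp(2) in auto)
qed

definition half_plane_chart_at :: "complex set \<Rightarrow> complex \<Rightarrow> bool" where
  "half_plane_chart_at M x \<longleftrightarrow> (\<exists>U V. x \<in> U \<and> openin (top_of_set M) U \<and>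
     openin (top_of_set upper_half_plane) V \<and> U homeomorphic V)"

lemma manifold_with_boundary_2_iff_charts:
  "manifold_with_boundary_2 M \<longleftrightarrow> (\<forall>x \<in> M. half_plane_chart_at M x)"
  by (simp add: manifold_with_boundary_2_def half_plane_chart_at_def)

lemma half_plane_chart_at_interior:
  assumes "x \<in> interior M"
  shows "half_plane_chart_at M x"
proof -
  obtain e where "e > 0" "ball x e \<subseteq> M" using assms by (meson mem_interior)
  have "ball \<i> 1 \<subseteq> upper_half_plane"
  proof
    fix w assume "w \<in> ball \<i> 1"
    then show "w \<in> upper_half_plane"
      using abs_Im_le_cmod[of "w - \<i>"] by (simp add: upper_half_plane_def dist_norm norm_minus_commute)
  qed
  then have "openin (top_of_set upper_half_plane) (ball \<i> 1)"
    using openin_open_Int[OF open_ball, of upper_half_plane \<i> 1] by (simp add: inf.absorb2)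
  moreover have "openin (top_of_set M) (ball x e)"
    using \<open>ball x e \<subseteq> M\<close> openin_open_Int[OF open_ball, of M x e] by (simp add: inf.absorb2)
  moreover have "ball x e homeomorphic ball \<i> 1" using \<open>e > 0\<close> by (intro homeomorphic_balls) auto
  ultimately show ?thesis using \<open>e > 0\<close> unfolding half_plane_chart_at_def by (metis centre_in_ball)
qed

lemma half_plane_chart_at_subgraph:
  fixes B :: "complex set" and F :: "real \<Rightarrow> real"
  assumes "v \<noteq> 0" "continuous_on UNIV F" "z \<in> B" "0 < a" "0 < b"
    and graph: "\<And>h t. \<bar>h\<bar> < a \<Longrightarrow> \<bar>t\<bar> < b \<Longrightarrow> frame_point z v h t \<in> B \<longleftrightarrow> t \<le> F h"
    and below_top: "\<And>h. \<bar>h\<bar> < a \<Longrightarrow> F h < b"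
  shows "half_plane_chart_at B z"
proof -
  define \<tau> where "\<tau> w = (w - z) / v" for w
  define P where "P y = z + y * v" for y
  have cont_\<tau>: "continuous_on UNIV \<tau>"
    unfolding \<tau>_def by (intro continuous_intros) (use \<open>v \<noteq> 0\<close> in auto)
  have cont_F_Re: "continuous_on UNIV (\<lambda>y. F (Re y))"
    by (rule continuous_on_compose2[OF \<open>continuous_on UNIV F\<close>]) (auto intro: continuous_intros)
  have P_\<tau>: "P (\<tau> w) = w" and \<tau>_P: "\<tau> (P y) = y" for w y
    using \<open>v \<noteq> 0\<close> by (simp_all add: P_def \<tau>_def)
  have graph': "P y \<in> B \<longleftrightarrow> Re y \<le> F (Im y)" if "\<bar>Im y\<bar> < a" "\<bar>Re y\<bar> < b" for y
    using graph[OF that] by (metis P_def frame_point_def complex_eq)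
  define U where "U = B \<inter> {w. \<bar>Im (\<tau> w)\<bar> < a \<and> \<bar>Re (\<tau> w)\<bar> < b}"
  define V where "V = upper_half_plane \<inter> {y. \<bar>Re y\<bar> < a \<and> Im y < F (Re y) + b}"
  define \<Phi> where "\<Phi> w = of_real (Im (\<tau> w)) + \<i> * of_real (F (Im (\<tau> w)) - Re (\<tau> w))" for w
  define \<Psi> where "\<Psi> y = P (of_real (F (Re y) - Im y) + \<i> * of_real (Re y))" for y
  have "homeomorphism U V \<Phi> \<Psi>"
  proof (rule homeomorphismI)
    have "continuous_on UNIV (\<lambda>w. Im (\<tau> w))" by (intro continuous_intros cont_\<tau>)
    then have "continuous_on UNIV (\<lambda>w. F (Im (\<tau> w)))"
      using continuous_on_compose2[OF \<open>continuous_on UNIV F\<close>] by blast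
    then have "continuous_on UNIV \<Phi>" unfolding \<Phi>_def by (intro continuous_intros cont_\<tau>)
    then show "continuous_on U \<Phi>" by (rule continuous_on_subset) simp
    have "continuous_on UNIV \<Psi>" unfolding \<Psi>_def P_def by (intro continuous_intros cont_F_Re)
    then show "continuous_on V \<Psi>" by (rule continuous_on_subset) simp
    show "\<Phi> ` U \<subseteq> V"
    proof
      fix y assume "y \<in> \<Phi> ` U"
      then obtain w where "w \<in> U" "y = \<Phi> w" by blast
      then have "\<bar>Im (\<tau> w)\<bar> < a" "\<bar>Re (\<tau> w)\<bar> < b" "Re (\<tau> w) \<le> F (Im (\<tau> w))"
        using graph'[of "\<tau> w"] P_\<tau>[of w] by (auto simp: U_def)
      then show "y \<in> V" using \<open>y = \<Phi> w\<close> by (simp add: V_def \<Phi>_def upper_half_plane_def)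
    qed
    show "\<Psi> ` V \<subseteq> U"
    proof
      fix x assume "x \<in> \<Psi> ` V"
      then obtain y where "y \<in> V" "x = \<Psi> y" by blast
      define y' where "y' = of_real (F (Re y) - Im y) + \<i> * of_real (Re y)"
      have "\<bar>Re y\<bar> < a" "0 \<le> Im y" "Im y < F (Re y) + b"
        using \<open>y \<in> V\<close> by (auto simp: V_def upper_half_plane_def)
      then have "\<bar>Im y'\<bar> < a" "\<bar>Re y'\<bar> < b" "Re y' \<le> F (Im y')"
        using below_top[of "Re y"] by (auto simp: y'_def)
      moreover have "x = P y'" using \<open>x = \<Psi> y\<close> by (simp add: \<Psi>_def y'_def)
      ultimately show "x \<in> U" using graph'[of y'] by (simp add: U_def \<tau>_P)
    qed
    show "\<Psi> (\<Phi> w) = w" if "w \<in> U" for w using P_\<tau>[of w] complex_eq[of "\<tau> w"] by (simp add: \<Psi>_def \<Phi>_def)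
    show "\<Phi> (\<Psi> y) = y" if "y \<in> V" for y by (simp add: \<Psi>_def \<Phi>_def \<tau>_P complex_eq_iff)
  qed
  moreover have "openin (top_of_set B) U" unfolding U_def
    by (intro openin_open_Int open_Collect_conj open_Collect_less continuous_intros cont_\<tau>)
  moreover have "openin (top_of_set upper_half_plane) V" unfolding V_def
    by (intro openin_open_Int open_Collect_conj open_Collect_less continuous_intros cont_F_Re)
  moreover have "z \<in> U" using \<open>z \<in> B\<close> \<open>0 < a\<close> \<open>0 < b\<close> by (simp add: U_def \<tau>_def)
  ultimately show ?thesis unfolding half_plane_chart_at_def homeomorphic_def by blast
qed

lemma semi_smooth_frontier_box:
  assumes ss: "semi_smooth B" and z: "z \<in> frontier B"
  obtains v a b L where "v \<noteq> 0" "0 < a" "0 < b" "0 \<le> L"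
    "\<And>h. \<bar>h\<bar> \<le> a \<Longrightarrow> frame_point z v h (- b) \<in> B"
    "\<And>h. \<bar>h\<bar> \<le> a \<Longrightarrow> frame_point z v h b \<notin> B"
    "\<And>h h' t t'. \<bar>h\<bar> \<le> a \<Longrightarrow> \<bar>h'\<bar> \<le> a \<Longrightarrow> \<bar>t\<bar> \<le> b \<Longrightarrow> \<bar>t'\<bar> \<le> b
      \<Longrightarrow> t' + L * \<bar>h - h'\<bar> \<le> t \<Longrightarrow> frame_point z v h t \<in> B \<Longrightarrow> frame_point z v h' t' \<in> B"
proof -
  have cl: "closed B" using ss by (simp add: semi_smooth_def)
  obtain v c r where v: "norm v = 1" and c: "0 < c" "c \<le> 1" and "0 < r"
    and transversal: "\<And>w u d. w \<in> frontier B \<Longrightarrow> dist w z < r \<Longrightarrow> normal_vector B w u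
      \<Longrightarrow> norm (d - v) \<le> c \<Longrightarrow> 0 < inner u d"
    using semi_smooth_locally_transversal[OF ss z] by blast
  define b where "b = r / 8"
  define a where "a = b * c / 4"
  have "0 < b" "0 < a" "a / c = b / 4" "2 * a / c = b / 2"
    using \<open>0 < r\<close> c by (auto simp: a_def b_def)
  have "a \<le> b / 4" using mult_left_mono[OF c(2), of b] \<open>0 < b\<close> by (simp add: a_def)
  then have "a + 5 * b < r" using \<open>0 < b\<close> by (simp add: b_def)
  have cone: "frame_point z v h' t' \<in> B" if "\<bar>h\<bar> \<le> a" "\<bar>h'\<bar> \<le> a" "\<bar>t\<bar> \<le> b" "\<bar>t'\<bar> \<le> b"
      "t' + \<bar>h - h'\<bar> / c \<le> t" "frame_point z v h t \<in> B" for h h' t t'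
    using transversal_cone_stable[OF cl v c \<open>a + 5 * b < r\<close> transversal that] .
  show ?thesis
  proof (rule that[of v a b "1 / c"])
    show "v \<noteq> 0" "0 < a" "0 < b" "0 \<le> 1 / c" using v \<open>0 < a\<close> \<open>0 < b\<close> c by auto
    show "frame_point z v h' t' \<in> B" if "\<bar>h\<bar> \<le> a" "\<bar>h'\<bar> \<le> a" "\<bar>t\<bar> \<le> b" "\<bar>t'\<bar> \<le> b"
      "t' + 1 / c * \<bar>h - h'\<bar> \<le> t" "frame_point z v h t \<in> B" for h h' t t'
      using cone[OF that(1-4)] that(5,6) by simp
  next
    fix h assume "\<bar>h\<bar> \<le> a"
    have "z \<in> B" using z cl by (simp add: frontier_def closure_closed)
    moreover have "\<bar>h\<bar> / c \<le> a / c" using \<open>\<bar>h\<bar> \<le> a\<close> c by (intro divide_right_mono) auto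
    then have "\<bar>h\<bar> / c \<le> b" using \<open>a / c = b / 4\<close> \<open>0 < b\<close> by linarith
    ultimately show "frame_point z v h (- b) \<in> B"
      using cone[of 0 h 0 "- b"] \<open>\<bar>h\<bar> \<le> a\<close> \<open>0 < a\<close> \<open>0 < b\<close> by (simp add: frame_point_def)
    show "frame_point z v h b \<notin> B"
    proof
      assume "frame_point z v h b \<in> B"
      \<comment> \<open>then the whole backward cone of this top point lies in \<open>B\<close>, yet it contains points
        of the complement arbitrarily close to \<open>z\<close>\<close>
      obtain q where "q \<notin> B" "dist z q < a" using z \<open>0 < a\<close> frontier_straddle by metis
      define y where "y = (q - z) / v"
      have "norm y < a" using v \<open>dist z q < a\<close> by (simp add: y_def norm_divide dist_norm norm_minus_commute)
      then have "\<bar>Re y\<bar> < a" "\<bar>Im y\<bar> < a"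
        using abs_Re_le_cmod[of y] abs_Im_le_cmod[of y] by linarith+
      moreover have "\<bar>h - Im y\<bar> / c \<le> 2 * a / c"
        using \<open>\<bar>h\<bar> \<le> a\<close> \<open>\<bar>Im y\<bar> < a\<close> c by (intro divide_right_mono) auto
      ultimately have "Re y + \<bar>h - Im y\<bar> / c \<le> b" "\<bar>Im y\<bar> \<le> a" "\<bar>Re y\<bar> \<le> b" "\<bar>b\<bar> \<le> b"
        using \<open>a \<le> b / 4\<close> \<open>2 * a / c = b / 2\<close> \<open>0 < b\<close> by linarith+
      then have "frame_point z v (Im y) (Re y) \<in> B"
        using cone[OF \<open>\<bar>h\<bar> \<le> a\<close>] \<open>frame_point z v h b \<in> B\<close> by blast
      moreover have "v \<noteq> 0" using v by auto
      ultimately show False using frame_point_coordinates[of v z q] \<open>q \<notin> B\<close> by (simp add: y_def)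
    qed
  qed
qed

lemma semi_smooth_chart_at_frontier:
  assumes ss: "semi_smooth B" and z: "z \<in> frontier B"
  shows "half_plane_chart_at B z"
proof -
  have cl: "closed B" using ss by (simp add: semi_smooth_def)
  obtain v a b L where "v \<noteq> 0" "0 < a" "0 < b" "0 \<le> L"
    and bottom: "\<And>h. \<bar>h\<bar> \<le> a \<Longrightarrow> frame_point z v h (- b) \<in> B"
    and top: "\<And>h. \<bar>h\<bar> \<le> a \<Longrightarrow> frame_point z v h b \<notin> B"
    and cone: "\<And>h h' t t'. \<bar>h\<bar> \<le> a \<Longrightarrow> \<bar>h'\<bar> \<le> a \<Longrightarrow> \<bar>t\<bar> \<le> b \<Longrightarrow> \<bar>t'\<bar> \<le> b
      \<Longrightarrow> t' + L * \<bar>h - h'\<bar> \<le> t \<Longrightarrow> frame_point z v h t \<in> B \<Longrightarrow> frame_point z v h' t' \<in> B"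
    using semi_smooth_frontier_box[OF ss z] by blast
  have closed_columns: "closed {t. frame_point z v h t \<in> B}" for h
  proof -
    have "continuous_on UNIV (frame_point z v h)" unfolding frame_point_def by (intro continuous_intros)
    then show ?thesis using continuous_closed_preimage[OF _ closed_UNIV cl] by (simp add: vimage_def)
  qed
  obtain F where "L-lipschitz_on UNIV F" "\<And>h. \<bar>h\<bar> \<le> a \<Longrightarrow> F h < b"
    "\<And>h t. \<bar>h\<bar> \<le> a \<Longrightarrow> \<bar>t\<bar> \<le> b \<Longrightarrow> frame_point z v h t \<in> B \<longleftrightarrow> t \<le> F h"
    by (rule lipschitz_subgraph_of_cone_stable[of a b L "\<lambda>h t. frame_point z v h t \<in> B"])
      (use \<open>0 < a\<close> \<open>0 < b\<close> \<open>0 \<le> L\<close> in \<open>auto intro: closed_columns bottom cone dest: top\<close>)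
  moreover have "z \<in> B" using z cl by (simp add: frontier_def closure_closed)
  ultimately show ?thesis
    using half_plane_chart_at_subgraph[OF \<open>v \<noteq> 0\<close> lipschitz_on_continuous_on _ \<open>0 < a\<close> \<open>0 < b\<close>] by force
qed

theorem theorem9p1:
  fixes B :: "complex set"
  assumes "closed B" and "semi_smooth B"
  shows "manifold_with_boundary_2 B"
  unfolding manifold_with_boundary_2_iff_charts
proof
  fix x assume "x \<in> B"
  show "half_plane_chart_at B x"
  proof (cases "x \<in> interior B")
    case True
    then show ?thesis by (rule half_plane_chart_at_interior)
  next
    case False
    then have "x \<in> frontier B" using \<open>x \<in> B\<close> \<open>closed B\<close> by (simp add: frontier_def closure_closed)
    with \<open>semi_smooth B\<close> show ?thesis by (rule semi_smooth_chart_at_frontier)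
  qed
qed

end
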